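(* Let $q=p^k$ be an odd prime power and let $\alpha\in\mathbb{F}_{q^2}^*$ have multiplicative order $q+1$. Let $Q,R,S\in\{p^i:i\ge0\}$ and $N=Q+R+S$. Then $$x^{N}+\alpha^{R+S}x^{Q+q(R+S)}+\alpha^{Q+S}x^{R+q(Q+S)}+\alpha^{Q+R}x^{S+q(Q+R)}$$ is a permutation polynomial of $\mathbb{F}_{q^2}$ if and only if $\gcd(N,q-1)=1$.
   Context: A polynomial is a permutation polynomial of $\mathbb{F}_{q^2}$ if the map it induces on $\mathbb{F}_{q^2}$ is bijective. *)

theory Defs
  imports "HOL-Computational_Algebra.Polynomial" "HOL-Computational_Algebra.Primes"
begin

definition permutation_polynomial :: "'a::field poly \<Rightarrow> bool" where
  "permutation_polynomial f \<longleftrightarrow> bij (poly f)"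

definition has_mult_order :: "'a::field \<Rightarrow> nat \<Rightarrow> bool" where
  "has_mult_order a n \<longleftrightarrow> a \<noteq> 0 \<and> 0 < n \<and> a ^ n = 1 \<and> (\<forall>m. 0 < m \<and> m < n \<longrightarrow> a ^ m \<noteq> 1)"

end

theory Submission
  imports Defs
begin

text \<open>Put \<open>u = x + \<alpha> x\<^sup>q\<close> and \<open>v = x - \<alpha> x\<^sup>q\<close>. Since \<open>Q, R, S\<close> are powers of the
  characteristic, twice the polynomial evaluates to \<open>u\<^sup>N + v\<^sup>N\<close>. The Frobenius
  \<open>z \<mapsto> z\<^sup>q\<close> is an additive involution of the field sending \<open>u\<close> to \<open>\<alpha>\<^sup>-\<^sup>1u\<close> and \<open>v\<close>
  to \<open>-\<alpha>\<^sup>-\<^sup>1v\<close>; as \<open>N\<close> is odd, applying it to \<open>u\<^sup>N + v\<^sup>N = u'\<^sup>N + v'\<^sup>N\<close> separates the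
  two summands, and \<open>gcd(N, q - 1) = 1\<close> then recovers \<open>u\<close> and \<open>v\<close>, hence \<open>x\<close>.
  Conversely, if \<open>d = gcd(N, q - 1) > 1\<close>, a \<open>d\<close>-th root of unity \<open>w \<noteq> 1\<close> satisfies
  \<open>w\<^sup>q = w\<close>, and on the line \<open>\<alpha> x\<^sup>q = x\<close> the polynomial is \<open>x \<mapsto> (2x)\<^sup>N/2\<close>, which
  identifies \<open>x\<close> and \<open>w x\<close>.\<close>

lemma field_power_card_minus_one:
  fixes x :: "'a::{field,finite}"
  assumes "x \<noteq> 0"
  shows "x ^ (card (UNIV :: 'a set) - 1) = 1"
proof -
  let ?U = "UNIV - {0::'a}"
  have "bij_betw ((*) x) ?U ?U"
    by (rule bij_betw_byWitness[where f' = "\<lambda>y. y / x"]) (use assms in auto)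
  hence "(\<Prod>y\<in>?U. x * y) = (\<Prod>y\<in>?U. y)"
    by (rule prod.reindex_bij_betw)
  moreover have "(\<Prod>y\<in>?U. x * y) = x ^ card ?U * (\<Prod>y\<in>?U. y)"
    by (simp add: prod.distrib)
  moreover have "(\<Prod>y\<in>?U. y) \<noteq> 0"
    by simp
  moreover have "card ?U = card (UNIV :: 'a set) - 1"
    by (simp add: card_Diff_singleton)
  ultimately show ?thesis
    by simp
qed

lemma field_power_card:
  fixes x :: "'a::{field,finite}"
  shows "x ^ card (UNIV :: 'a set) = x"
proof (cases "x = 0")
  case False
  have "card (UNIV :: 'a set) = Suc (card (UNIV :: 'a set) - 1)"
    using finite_UNIV_card_ge_0[where ?'a = 'a] by simp
  then show ?thesis
    using field_power_card_minus_one[OF False] by (metis mult.right_neutral power_Suc)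
qed (simp add: zero_power finite_UNIV_card_ge_0)

lemma CHAR_eq_if_card_prime_power:
  assumes "prime p" and "card (UNIV :: 'a::{field,finite} set) = p ^ m"
  shows "CHAR('a) = p"
proof -
  have "prime CHAR('a)"
    by (rule prime_CHAR_semidom) (simp add: finite_imp_CHAR_pos)
  moreover have "(\<Sum>y\<in>UNIV. y + (1::'a)) = (\<Sum>y\<in>UNIV. y)"
    by (rule sum.reindex_bij_witness[of _ "\<lambda>y. y - 1" "\<lambda>y. y + 1"]) auto
  hence "of_nat (card (UNIV :: 'a set)) = (0::'a)"
    by (simp add: sum.distrib)
  hence "CHAR('a) dvd p ^ m"
    using assms(2) of_nat_eq_0_iff_char_dvd by metis
  ultimately show ?thesis
    using assms(1) prime_dvd_power primes_dvd_imp_eq by blast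
qed

text \<open>If \<open>1\<close> were the only \<open>d\<close>-th root of unity, the \<open>d\<close>-th power map would permute
  the \<open>d * e\<close> nonzero elements, so all of them would be roots of \<open>X\<^sup>e - 1\<close>.\<close>
lemma exists_nontrivial_root_of_unity:
  assumes "d \<ge> 2" and "d dvd card (UNIV :: 'a::{field,finite} set) - 1"
  shows "\<exists>w::'a. w ^ d = 1 \<and> w \<noteq> 1"
proof (rule ccontr)
  assume "\<not> ?thesis"
  hence trivial: "w = 1" if "w ^ d = (1::'a)" for w
    using that by blast
  let ?U = "UNIV - {0::'a}"
  obtain e where e: "card (UNIV :: 'a set) - 1 = d * e"
    using assms(2) by blast
  have "card {0, 1::'a} \<le> card (UNIV :: 'a set)"
    by (rule card_mono) auto
  hence "e \<ge> 1"
    using e by (cases e) auto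
  have "inj_on (\<lambda>w. w ^ d) ?U"
  proof (rule inj_onI)
    fix w w' :: 'a
    assume "w \<in> ?U" "w' \<in> ?U" "w ^ d = w' ^ d"
    hence "(w / w') ^ d = 1"
      by (simp add: power_divide)
    with \<open>w' \<in> ?U\<close> show "w = w'"
      using trivial[of "w / w'"] by simp
  qed
  hence "(\<lambda>w. w ^ d) ` ?U = ?U"
    by (intro endo_inj_surj) auto
  hence roots: "?U \<subseteq> {x. poly (monom 1 e - 1) x = 0}"
  proof (intro subsetI)
    fix x assume "x \<in> ?U"
    then obtain y where "y \<in> ?U" "x = y ^ d"
      using \<open>(\<lambda>w. w ^ d) ` ?U = ?U\<close> by (metis imageE)
    hence "x ^ e = 1"
      using field_power_card_minus_one[of y] e by (simp add: power_mult)
    thus "x \<in> {x. poly (monom 1 e - 1) x = 0}"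
      by (simp add: poly_monom)
  qed
  have "coeff (monom (1::'a) e - 1) e = 1"
    using \<open>e \<ge> 1\<close> by simp
  hence "monom (1::'a) e - 1 \<noteq> 0"
    by (metis coeff_0 zero_neq_one)
  moreover have "degree (monom (1::'a) e - 1) \<le> e"
    by (intro degree_diff_le) (simp_all add: degree_monom_le)
  ultimately have "card {x::'a. poly (monom 1 e - 1) x = 0} \<le> e"
    using card_poly_roots_bound order.trans by blast
  moreover have "d * e \<le> card {x::'a. poly (monom 1 e - 1) x = 0}"
    using card_mono[OF _ roots] e by (simp add: card_Diff_singleton)
  ultimately have "d * e \<le> e"
    by linarith
  thus False
    using assms(1) \<open>e \<ge> 1\<close> by simp
qed

lemma power_diff_if_power_additive:
  fixes a b :: "'a::comm_ring_1"
  assumes "\<And>x y::'a. (x + y) ^ E = x ^ E + y ^ E"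
  shows "(a - b) ^ E = a ^ E - b ^ E"
  using assms[of "a - b" b] by (simp add: algebra_simps)

lemma power_gcd_eq_one:
  fixes w :: "'a::field"
  assumes "w ^ m = 1" and "w ^ n = 1"
  shows "w ^ gcd m n = 1"
proof (cases "m = 0")
  case False
  obtain a b where "m * a = n * b + gcd m n"
    using bezout_nat[OF False] by blast
  hence "(w ^ m) ^ a = (w ^ n) ^ b * w ^ gcd m n"
    by (simp flip: power_mult power_add)
  with assms show ?thesis
    by simp
qed (use assms in simp)

text \<open>With \<open>y = x\<^sup>q\<close>, \<open>(x \<pm> \<alpha> y)\<^sup>N\<close> factors into three binomials, and the four
  monomials are the terms of even degree in \<open>\<alpha> y\<close>.\<close>
lemma twice_quadrinomial_eq_power_sum:
  fixes x \<alpha> :: "'a::comm_ring_1" and Q R S N q :: nat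
  assumes additive: "\<And>a b::'a. (a + b) ^ Q = a ^ Q + b ^ Q"
    "\<And>a b::'a. (a + b) ^ R = a ^ R + b ^ R" "\<And>a b::'a. (a + b) ^ S = a ^ S + b ^ S"
    and "N = Q + R + S"
  shows "2 * (x ^ N + \<alpha> ^ (R + S) * x ^ (Q + q * (R + S)) + \<alpha> ^ (Q + S) * x ^ (R + q * (Q + S))
           + \<alpha> ^ (Q + R) * x ^ (S + q * (Q + R)))
         = (x + \<alpha> * x ^ q) ^ N + (x - \<alpha> * x ^ q) ^ N"
proof -
  define y where "y = x ^ q"
  have subtractive: "(a - b) ^ E = a ^ E - b ^ E" if "E \<in> {Q, R, S}" for a b :: 'a and E
    using that additive by (auto intro: power_diff_if_power_additive)
  have "(x + \<alpha> * y) ^ N = (x^Q + \<alpha>^Q * y^Q) * (x^R + \<alpha>^R * y^R) * (x^S + \<alpha>^S * y^S)"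
    using additive by (simp add: assms(4) power_add power_mult_distrib)
  moreover have "(x - \<alpha> * y) ^ N = (x^Q - \<alpha>^Q * y^Q) * (x^R - \<alpha>^R * y^R) * (x^S - \<alpha>^S * y^S)"
    using subtractive by (simp add: assms(4) power_add power_mult_distrib)
  moreover have "x ^ (Q + q * (R + S)) = x^Q * y^R * y^S" "x ^ (R + q * (Q + S)) = x^R * y^Q * y^S"
    "x ^ (S + q * (Q + R)) = x^S * y^Q * y^R" "x ^ N = x^Q * x^R * x^S"
    by (simp_all add: y_def assms(4) power_add power_mult mult.assoc)
  ultimately show ?thesis
    unfolding y_def[symmetric] by (simp add: power_add algebra_simps)
qed

lemma eigenvector_power_eq_imp_eq:
  fixes u u' \<beta> :: "'a::field" and q N :: nat
  assumes "u ^ q = \<beta> * u" "u' ^ q = \<beta> * u'" "\<beta> \<noteq> 0" "q \<ge> 1"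
    and "u ^ N = u' ^ N" "N > 0" "coprime N (q - 1)"
  shows "u = u'"
proof (cases "u' = 0")
  case True
  with assms(5,6) show ?thesis
    by (simp add: zero_power)
next
  case False
  define w where "w = u / u'"
  have "w ^ N = 1"
    using assms(5) False by (simp add: w_def power_divide)
  hence "w \<noteq> 0"
    using assms(6) by (auto simp: zero_power)
  have "w * w ^ (q - 1) = w * 1"
    using assms(1-4) False by (simp add: w_def power_divide flip: power_Suc)
  hence "w ^ (q - 1) = 1"
    using \<open>w \<noteq> 0\<close> by simp
  with \<open>w ^ N = 1\<close> have "w ^ gcd N (q - 1) = 1"
    by (rule power_gcd_eq_one)
  with assms(7) False show ?thesis
    by (simp add: w_def)
qed

text \<open>The \<open>q\<close>-th power of \<open>D = u\<^sup>N - u'\<^sup>N = v'\<^sup>N - v\<^sup>N\<close> is both \<open>\<beta>\<^sup>N D\<close> and, as \<open>N\<close> is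
  odd, \<open>-\<beta>\<^sup>N D\<close>; hence \<open>D = 0\<close>.\<close>
lemma power_sum_of_opposite_eigenvectors_cancel:
  fixes u u' v v' \<beta> :: "'a::field" and q N :: nat
  assumes additive: "\<And>a b::'a. (a + b) ^ q = a ^ q + b ^ q"
    and "u ^ q = \<beta> * u" "u' ^ q = \<beta> * u'" "v ^ q = - \<beta> * v" "v' ^ q = - \<beta> * v'"
    and "\<beta> \<noteq> 0" "(2::'a) \<noteq> 0" "odd N" "u ^ N + v ^ N = u' ^ N + v' ^ N"
  shows "u ^ N = u' ^ N \<and> v ^ N = v' ^ N"
proof -
  have subtractive: "(a - b) ^ q = a ^ q - b ^ q" for a b :: 'a
    using additive by (rule power_diff_if_power_additive)
  have power_commute: "(z ^ N) ^ q = (z ^ q) ^ N" for z :: 'a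
    by (simp flip: power_mult add: mult.commute)
  define D where "D = u ^ N - u' ^ N"
  have D': "D = v' ^ N - v ^ N"
    using assms(9) by (simp add: D_def algebra_simps)
  have "D ^ q = \<beta> ^ N * D"
    unfolding D_def subtractive power_commute assms(2,3) by (simp add: power_mult_distrib algebra_simps)
  moreover have "D ^ q = - (\<beta> ^ N) * D"
    unfolding D' subtractive power_commute assms(4,5)
    using assms(8) by (simp add: power_mult_distrib algebra_simps)
  ultimately have "2 * \<beta> ^ N * D = 0"
    by (simp add: algebra_simps)
  hence "D = 0"
    using assms(6,7) by simp
  thus ?thesis
    using D' by (simp add: D_def)
qed

definition twisted_power_sum :: "'a::comm_ring_1 \<Rightarrow> nat \<Rightarrow> nat \<Rightarrow> 'a \<Rightarrow> 'a" where
  "twisted_power_sum \<alpha> q N x = (x + \<alpha> * x ^ q) ^ N + (x - \<alpha> * x ^ q) ^ N"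

lemma inj_twisted_power_sum:
  fixes \<alpha> :: "'a::field" and q N :: nat
  assumes additive: "\<And>x y::'a. (x + y) ^ q = x ^ q + y ^ q"
    and involutive: "\<And>z::'a. (z ^ q) ^ q = z"
    and "\<alpha> \<noteq> 0" "\<alpha> ^ q = inverse \<alpha>" "(2::'a) \<noteq> 0" "odd N" "coprime N (q - 1)"
  shows "inj (twisted_power_sum \<alpha> q N)"
proof (rule injI)
  fix x y :: 'a
  assume eq: "twisted_power_sum \<alpha> q N x = twisted_power_sum \<alpha> q N y"
  have "q \<ge> 1"
    using involutive[of 0] by (cases q) auto
  have "N > 0"
    using \<open>odd N\<close> by (cases N) auto
  have plus_eigen: "(z + \<alpha> * z ^ q) ^ q = inverse \<alpha> * (z + \<alpha> * z ^ q)" for z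
  proof -
    have "(z + \<alpha> * z ^ q) ^ q = z ^ q + inverse \<alpha> * z"
      by (simp add: additive power_mult_distrib involutive assms(4))
    also have "\<dots> = inverse \<alpha> * (z + \<alpha> * z ^ q)"
      using assms(3) by (simp add: distrib_left)
    finally show ?thesis .
  qed
  have minus_eigen: "(z - \<alpha> * z ^ q) ^ q = - inverse \<alpha> * (z - \<alpha> * z ^ q)" for z
  proof -
    have "(z - \<alpha> * z ^ q) ^ q = z ^ q - inverse \<alpha> * z"
      by (simp add: power_diff_if_power_additive[OF additive] power_mult_distrib involutive assms(4))
    also have "\<dots> = - inverse \<alpha> * (z - \<alpha> * z ^ q)"
      using assms(3) by (simp add: algebra_simps)
    finally show ?thesis .
  qed
  have "inverse \<alpha> \<noteq> 0" "- inverse \<alpha> \<noteq> 0"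
    using assms(3) by simp_all
  have "(x + \<alpha> * x ^ q) ^ N + (x - \<alpha> * x ^ q) ^ N = (y + \<alpha> * y ^ q) ^ N + (y - \<alpha> * y ^ q) ^ N"
    using eq unfolding twisted_power_sum_def .
  then obtain plus_pow: "(x + \<alpha> * x ^ q) ^ N = (y + \<alpha> * y ^ q) ^ N"
    and minus_pow: "(x - \<alpha> * x ^ q) ^ N = (y - \<alpha> * y ^ q) ^ N"
    using power_sum_of_opposite_eigenvectors_cancel[OF additive plus_eigen plus_eigen
        minus_eigen minus_eigen \<open>inverse \<alpha> \<noteq> 0\<close> assms(5,6)] by blast
  have "x + \<alpha> * x ^ q = y + \<alpha> * y ^ q"
    by (rule eigenvector_power_eq_imp_eq[OF plus_eigen plus_eigen \<open>inverse \<alpha> \<noteq> 0\<close>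
          \<open>q \<ge> 1\<close> plus_pow \<open>N > 0\<close> assms(7)])
  moreover have "x - \<alpha> * x ^ q = y - \<alpha> * y ^ q"
    by (rule eigenvector_power_eq_imp_eq[OF minus_eigen minus_eigen \<open>- inverse \<alpha> \<noteq> 0\<close>
          \<open>q \<ge> 1\<close> minus_pow \<open>N > 0\<close> assms(7)])
  ultimately have "(x + \<alpha> * x ^ q) + (x - \<alpha> * x ^ q) = (y + \<alpha> * y ^ q) + (y - \<alpha> * y ^ q)"
    by (rule arg_cong2[where f = "(+)"])
  moreover have "(z + a) + (z - a) = 2 * z" for z a :: 'a
    by (simp add: algebra_simps)
  ultimately have "2 * x = 2 * y"
    by metis
  with assms(5) show "x = y"
    by simp
qed

lemma not_inj_twisted_power_sum:
  fixes \<alpha> w :: "'a::field" and q N :: nat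
  assumes additive: "\<And>x y::'a. (x + y) ^ q = x ^ q + y ^ q"
    and "\<alpha> \<noteq> 0" "\<alpha> ^ q = inverse \<alpha>" "\<alpha> \<noteq> -1" "(2::'a) \<noteq> 0"
    and "w ^ q = w" "w ^ N = 1" "w \<noteq> 1" "N > 0"
  shows "\<not> inj (twisted_power_sum \<alpha> q N)"
proof
  assume inj: "inj (twisted_power_sum \<alpha> q N)"
  define x\<^sub>0 where "x\<^sub>0 = (1 + \<alpha>) / 2"
  have "(2::'a) ^ q = 2"
    using additive[of 1 1] by simp
  have on_line_x\<^sub>0: "\<alpha> * x\<^sub>0 ^ q = x\<^sub>0"
  proof -
    have "x\<^sub>0 ^ q = (1 + inverse \<alpha>) / 2"
      using \<open>2 ^ q = 2\<close> by (simp add: x\<^sub>0_def power_divide additive assms(3))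
    then have "\<alpha> * x\<^sub>0 ^ q = (\<alpha> * 1 + \<alpha> * inverse \<alpha>) / 2"
      by (simp only: distrib_left times_divide_eq_right)
    also have "\<dots> = x\<^sub>0"
      using assms(2) by (simp add: x\<^sub>0_def add.commute)
    finally show ?thesis .
  qed
  have on_line: "twisted_power_sum \<alpha> q N x = (2 * x) ^ N" if "\<alpha> * x ^ q = x" for x
  proof -
    have "x - \<alpha> * x ^ q = 0" "x + \<alpha> * x ^ q = 2 * x"
      using that by simp_all
    with assms(9) show ?thesis
      by (simp add: twisted_power_sum_def zero_power)
  qed
  have "\<alpha> * (w * x\<^sub>0) ^ q = w * x\<^sub>0"
    using on_line_x\<^sub>0 assms(6) by (simp add: power_mult_distrib mult.left_commute)
  hence "twisted_power_sum \<alpha> q N (w * x\<^sub>0) = w ^ N * (2 * x\<^sub>0) ^ N"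
    by (simp add: on_line power_mult_distrib)
  also have "\<dots> = twisted_power_sum \<alpha> q N x\<^sub>0"
    using on_line[OF on_line_x\<^sub>0] assms(7) by simp
  finally have "twisted_power_sum \<alpha> q N (w * x\<^sub>0) = twisted_power_sum \<alpha> q N x\<^sub>0" .
  hence "w * x\<^sub>0 = x\<^sub>0"
    by (rule injD[OF inj])
  moreover have "x\<^sub>0 \<noteq> 0"
    using assms(4,5) unfolding x\<^sub>0_def by (simp only: divide_eq_0_iff add_eq_0_iff) simp
  ultimately show False
    using assms(8) by simp
qed

lemma inj_twisted_power_sum_iff:
  fixes \<alpha> :: "'a::{field,finite}" and q N :: nat
  assumes additive: "\<And>x y::'a. (x + y) ^ q = x ^ q + y ^ q"
    and card: "card (UNIV :: 'a set) = q ^ 2"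
    and "\<alpha> ^ (q + 1) = 1" "\<alpha> \<noteq> -1" "(2::'a) \<noteq> 0" "odd N"
  shows "inj (twisted_power_sum \<alpha> q N) \<longleftrightarrow> coprime N (q - 1)"
proof -
  have "\<alpha> \<noteq> 0"
    using assms(3) by auto
  have "\<alpha> ^ q = inverse \<alpha>"
    using assms(3) \<open>\<alpha> \<noteq> 0\<close> by (simp add: field_simps)
  have "N > 0"
    using \<open>odd N\<close> by (cases N) auto
  have "card {0, 1::'a} \<le> q ^ 2"
    unfolding card[symmetric] by (rule card_mono) auto
  hence "q \<ge> 1"
    by (cases q) auto
  show ?thesis
  proof
    assume inj: "inj (twisted_power_sum \<alpha> q N)"
    show "coprime N (q - 1)"
    proof (rule ccontr)
      assume "\<not> coprime N (q - 1)"
      define d where "d = gcd N (q - 1)"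
      have "d \<noteq> 1" "d > 0"
        using \<open>\<not> coprime N (q - 1)\<close> \<open>N > 0\<close> by (simp_all add: d_def coprime_iff_gcd_eq_1)
      hence "d \<ge> 2"
        by linarith
      moreover have "card (UNIV :: 'a set) - 1 = (q - 1) * (q + 1)"
        using card \<open>q \<ge> 1\<close> by (simp add: power2_eq_square algebra_simps)
      hence "d dvd card (UNIV :: 'a set) - 1"
        unfolding d_def by simp
      ultimately obtain w :: 'a where "w ^ d = 1" "w \<noteq> 1"
        using exists_nontrivial_root_of_unity by blast
      have "w ^ (q - 1) = 1" "w ^ N = 1"
        using \<open>w ^ d = 1\<close> unfolding d_def by (metis dvd_def gcd_dvd2 gcd_dvd1 power_mult power_one)+
      hence "w ^ q = w"
        using \<open>q \<ge> 1\<close> by (metis Suc_diff_1 less_le_trans mult.right_neutral power_Suc zero_less_one)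
      with inj show False
        using not_inj_twisted_power_sum[OF additive \<open>\<alpha> \<noteq> 0\<close> \<open>\<alpha> ^ q = inverse \<alpha>\<close> assms(4,5)]
          \<open>w ^ N = 1\<close> \<open>w \<noteq> 1\<close> \<open>N > 0\<close> by blast
    qed
  next
    assume "coprime N (q - 1)"
    moreover have "(z ^ q) ^ q = z" for z :: 'a
      using field_power_card[of z] card by (simp flip: power_mult add: power2_eq_square)
    ultimately show "inj (twisted_power_sum \<alpha> q N)"
      using inj_twisted_power_sum[OF additive] \<open>\<alpha> \<noteq> 0\<close> \<open>\<alpha> ^ q = inverse \<alpha>\<close> assms(5,6) by blast
  qed
qed

lemma permutation_polynomial_iff_inj:
  fixes f :: "'a::{field,finite} poly"
  shows "permutation_polynomial f \<longleftrightarrow> inj (poly f)"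
  unfolding permutation_polynomial_def bij_def using finite_UNIV_inj_surj[OF finite_UNIV] by blast

theorem mainTheorem11:
  fixes p k q Q R S N :: nat and \<alpha> :: "'a::{field,finite}"
  assumes "prime p" and "odd p" and "k \<ge> 1" and "q = p ^ k"
    and "card (UNIV :: 'a set) = q ^ 2"
    and "has_mult_order \<alpha> (q + 1)"
    and "\<exists>i. Q = p ^ i" and "\<exists>i. R = p ^ i" and "\<exists>i. S = p ^ i"
    and "N = Q + R + S"
  shows "permutation_polynomial
           (monom 1 N
            + monom (\<alpha> ^ (R + S)) (Q + q * (R + S))
            + monom (\<alpha> ^ (Q + S)) (R + q * (Q + S))
            + monom (\<alpha> ^ (Q + R)) (S + q * (Q + R)))
         \<longleftrightarrow> gcd N (q - 1) = 1" (is "permutation_polynomial ?F \<longleftrightarrow> _")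
proof -
  obtain i j l where exponents: "Q = p ^ i" "R = p ^ j" "S = p ^ l"
    using assms(7-9) by blast
  have "p \<ge> 3"
    using prime_ge_2_nat[OF assms(1)] assms(2) by (cases "p = 2") auto
  have "CHAR('a) = p"
    using CHAR_eq_if_card_prime_power[OF assms(1)] assms(4,5) by (simp flip: power_mult)
  hence additive: "(x + y) ^ (p ^ m) = x ^ (p ^ m) + y ^ (p ^ m)" for x y :: 'a and m
    using freshmans_dream'[of "p ^ m" m x y] assms(1) by simp
  have "\<not> CHAR('a) dvd 2"
    using \<open>CHAR('a) = p\<close> \<open>p \<ge> 3\<close> by (auto dest: dvd_imp_le)
  hence "(2::'a) \<noteq> 0"
    using of_nat_eq_0_iff_char_dvd[of 2, where ?'a = 'a] by simp
  have "q \<ge> 3"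
    using power_increasing[of 1 k p] \<open>p \<ge> 3\<close> assms(3,4) by simp
  with assms(6) have "\<alpha> ^ (q + 1) = 1" "\<alpha> \<noteq> -1"
    unfolding has_mult_order_def by (auto dest: spec[of _ 2])
  have "odd N"
    using assms(2,10) by (simp add: exponents)
  have "poly ?F = (\<lambda>x. twisted_power_sum \<alpha> q N x / 2)"
  proof
    fix x
    have "2 * poly ?F x = twisted_power_sum \<alpha> q N x"
      using twice_quadrinomial_eq_power_sum[of Q R S N x \<alpha> q] assms(10) additive
      by (simp add: exponents poly_monom twisted_power_sum_def)
    with \<open>(2::'a) \<noteq> 0\<close> show "poly ?F x = twisted_power_sum \<alpha> q N x / 2"
      by (simp add: eq_divide_eq mult.commute)
  qed
  hence "inj (poly ?F) \<longleftrightarrow> inj (twisted_power_sum \<alpha> q N)"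
    using \<open>(2::'a) \<noteq> 0\<close> by (simp add: inj_def)
  thus ?thesis
    using inj_twisted_power_sum_iff[of q \<alpha> N] additive assms(4,5) \<open>\<alpha> ^ (q + 1) = 1\<close>
      \<open>\<alpha> \<noteq> -1\<close> \<open>(2::'a) \<noteq> 0\<close> \<open>odd N\<close>
    by (simp add: permutation_polynomial_iff_inj coprime_iff_gcd_eq_1)
qed

end
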